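(* Let $I\subset\mathbb{R}$ be an interval, let $a,b,c,d,f,g:I\to\mathbb{R}$ be given with $a(t)\neq0$ on $I$, and let $b_1,b_2$ be real constants. Suppose $\mu>0,\alpha,\beta,\gamma,\delta,\varepsilon,\kappa$ are differentiable functions on $I$ satisfying $$\alpha'+b=2c\alpha+4a\alpha^2,\quad \beta'=(c+4a\alpha)\beta,\quad \gamma'=a\beta^2,$$ $$\delta'+2\alpha g=(c+4a\alpha)\delta+f,\quad \varepsilon'=(2a\delta-g)\beta,\quad \kappa'=a\delta^2-g\delta,$$ and $\alpha=-\dfrac{\mu'}{4a\mu}-\dfrac{d}{2a}$. Let $S(x,t)=\alpha(t)x^2+\delta(t)x+\kappa(t)$ and define $$h_1=a\beta^2\mu e^{-2S},\quad L_1=-b_1a\beta^2,\quad M_i=b_ia\beta^2\mu^{-1/2}e^{S}\ (i=1,2).$$ If $u(\xi,\tau),v(\xi,\tau)$ solve the Gray–Scott-type system $$u_\tau=u_{\xi\xi}-uv^2+b_1(1-u),\qquad v_\tau=v_{\xi\xi}+uv^2-b_1v+b_2,$$ then $\psi=\mu^{-1/2}e^{S}u(\xi,\tau)$, $\varphi=\mu^{-1/2}e^{S}v(\xi,\tau)$, with $\xi=\beta(t)x+\varepsilon(t)$, $\tau=\gamma(t)$, solve $$\psi_t=a\psi_{xx}-(bx^2-d-L_1-xf)\psi-(g-cx)\psi_x-h_1\psi\varphi^2+M_1,$$ $$\varphi_t=a\varphi_{xx}-(bx^2-d-L_1-xf)\varphi-(g-cx)\varphi_x+h_1\psi\varphi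^2+M_2.$$
   Context: All functions are real-valued; primes denote derivatives with respect to $t$. *)

theory Defs
  imports "HOL-Analysis.Analysis"
begin

definition phaseS :: "(real \<Rightarrow> real) \<Rightarrow> (real \<Rightarrow> real) \<Rightarrow> (real \<Rightarrow> real) \<Rightarrow> real \<Rightarrow> real \<Rightarrow> real" where
  "phaseS al de ka x t = al t * x\<^sup>2 + de t * x + ka t"

end

theory Submission
  imports Defs
begin

text \<open>
  The substitution \<open>\<psi> = \<mu>\<^sup>-\<^sup>1\<^sup>/\<^sup>2 e\<^sup>S U(\<beta>x + \<epsilon>, \<gamma>)\<close> turns \<open>U\<^sub>\<tau> = U\<^sub>\<xi>\<^sub>\<xi> + N\<close> into
  \<open>\<psi>\<^sub>t = a\<psi>\<^sub>x\<^sub>x - (bx\<^sup>2 - d - xf)\<psi> - (g - cx)\<psi>\<^sub>x + a\<beta>\<^sup>2\<mu>\<^sup>-\<^sup>1\<^sup>/\<^sup>2 e\<^sup>S N\<close>. Comparing coefficients,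
  the \<open>x\<^sup>2\<close>, \<open>x\<close> and constant terms in \<open>\<psi>\<close> cancel by the equations for \<open>\<alpha>, \<delta>, \<kappa>\<close> together with
  \<open>\<mu>'/\<mu> = -4a\<alpha> - 2d\<close>, the terms in \<open>U\<^sub>\<xi>\<close> cancel by those for \<open>\<beta>, \<epsilon>\<close>, and \<open>\<gamma>' = a\<beta>\<^sup>2\<close> matches
  the diffusion terms. Taking for \<open>N\<close> the Gray--Scott reaction terms gives the theorem, since
  \<open>h\<^sub>1\<psi>\<phi>\<^sup>2 = a\<beta>\<^sup>2\<mu>\<^sup>-\<^sup>1\<^sup>/\<^sup>2 e\<^sup>S uv\<^sup>2\<close>.
\<close>

lemma DERIV_chain_pair:
  fixes F Fx Ft :: "real \<times> real \<Rightarrow> real" and g1 g2 :: "real \<Rightarrow> real"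
  assumes F: "\<And>p. (F has_derivative (\<lambda>(h, k). Fx p * h + Ft p * k)) (at p)"
    and g1: "(g1 has_real_derivative d1) (at t within S)"
    and g2: "(g2 has_real_derivative d2) (at t within S)"
  shows "((\<lambda>s. F (g1 s, g2 s)) has_real_derivative
           Fx (g1 t, g2 t) * d1 + Ft (g1 t, g2 t) * d2) (at t within S)"
proof -
  have "((\<lambda>s. (g1 s, g2 s)) has_derivative (\<lambda>h. (d1 * h, d2 * h))) (at t within S)"
    using g1 g2 unfolding has_field_derivative_def by (intro has_derivative_Pair) auto
  then have "(F \<circ> (\<lambda>s. (g1 s, g2 s)) has_derivative
        (\<lambda>(h, k). Fx (g1 t, g2 t) * h + Ft (g1 t, g2 t) * k) \<circ> (\<lambda>h. (d1 * h, d2 * h))) (at t within S)"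
    by (rule diff_chain_within) (rule has_derivative_at_withinI[OF F])
  then show ?thesis
    unfolding has_field_derivative_def
    by (simp add: o_def) (erule has_derivative_eq_rhs, auto simp: algebra_simps fun_eq_iff)
qed

lemma DERIV_pair_fst:
  fixes F Fx Ft :: "real \<times> real \<Rightarrow> real"
  assumes "\<And>p. (F has_derivative (\<lambda>(h, k). Fx p * h + Ft p * k)) (at p)"
  shows "((\<lambda>s. F (s, y)) has_real_derivative Fx (x, y)) (at x)"
  using DERIV_chain_pair[OF assms DERIV_ident DERIV_const[of y], where t=x and S=UNIV] by simp

locale riccati_system =
  fixes I :: "real set"
    and a b c d f g :: "real \<Rightarrow> real"
    and mu al be ga de ep ka :: "real \<Rightarrow> real"
    and mu' al' be' ga' de' ep' ka' :: "real \<Rightarrow> real"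
  assumes a_nz: "\<And>t. t \<in> I \<Longrightarrow> a t \<noteq> 0"
    and mu_pos: "\<And>t. t \<in> I \<Longrightarrow> mu t > 0"
    and mu_deriv: "\<And>t. t \<in> I \<Longrightarrow> (mu has_real_derivative mu' t) (at t within I)"
    and al_deriv: "\<And>t. t \<in> I \<Longrightarrow> (al has_real_derivative al' t) (at t within I)"
    and be_deriv: "\<And>t. t \<in> I \<Longrightarrow> (be has_real_derivative be' t) (at t within I)"
    and ga_deriv: "\<And>t. t \<in> I \<Longrightarrow> (ga has_real_derivative ga' t) (at t within I)"
    and de_deriv: "\<And>t. t \<in> I \<Longrightarrow> (de has_real_derivative de' t) (at t within I)"
    and ep_deriv: "\<And>t. t \<in> I \<Longrightarrow> (ep has_real_derivative ep' t) (at t within I)"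
    and ka_deriv: "\<And>t. t \<in> I \<Longrightarrow> (ka has_real_derivative ka' t) (at t within I)"
    and ode_al: "\<And>t. t \<in> I \<Longrightarrow> al' t + b t = 2 * c t * al t + 4 * a t * (al t)\<^sup>2"
    and ode_be: "\<And>t. t \<in> I \<Longrightarrow> be' t = (c t + 4 * a t * al t) * be t"
    and ode_ga: "\<And>t. t \<in> I \<Longrightarrow> ga' t = a t * (be t)\<^sup>2"
    and ode_de: "\<And>t. t \<in> I \<Longrightarrow> de' t + 2 * al t * g t = (c t + 4 * a t * al t) * de t + f t"
    and ode_ep: "\<And>t. t \<in> I \<Longrightarrow> ep' t = (2 * a t * de t - g t) * be t"
    and ode_ka: "\<And>t. t \<in> I \<Longrightarrow> ka' t = a t * (de t)\<^sup>2 - g t * de t"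
    and al_mu: "\<And>t. t \<in> I \<Longrightarrow> al t = - mu' t / (4 * a t * mu t) - d t / (2 * a t)"
begin

definition amplitude :: "real \<Rightarrow> real \<Rightarrow> real" where
  "amplitude x t = mu t powr (-1/2) * exp (phaseS al de ka x t)"

definition transform :: "(real \<times> real \<Rightarrow> real) \<Rightarrow> real \<Rightarrow> real \<Rightarrow> real" where
  "transform U x t = amplitude x t * U (be t * x + ep t, ga t)"

definition transform_dx :: "(real \<times> real \<Rightarrow> real) \<Rightarrow> (real \<times> real \<Rightarrow> real) \<Rightarrow> real \<Rightarrow> real \<Rightarrow> real" where
  "transform_dx U Ux x t = amplitude x t *
     ((2 * al t * x + de t) * U (be t * x + ep t, ga t) + be t * Ux (be t * x + ep t, ga t))"

definition transform_dxx ::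
    "(real \<times> real \<Rightarrow> real) \<Rightarrow> (real \<times> real \<Rightarrow> real) \<Rightarrow> (real \<times> real \<Rightarrow> real) \<Rightarrow> real \<Rightarrow> real \<Rightarrow> real" where
  "transform_dxx U Ux Uxx x t = amplitude x t *
     (((2 * al t * x + de t)\<^sup>2 + 2 * al t) * U (be t * x + ep t, ga t)
      + 2 * (2 * al t * x + de t) * be t * Ux (be t * x + ep t, ga t)
      + (be t)\<^sup>2 * Uxx (be t * x + ep t, ga t))"

lemma amplitude_has_derivative_x:
  "((\<lambda>y. amplitude y t) has_real_derivative (2 * al t * x + de t) * amplitude x t) (at x)"
  unfolding amplitude_def phaseS_def
  by (rule derivative_eq_intros refl)+ (simp add: algebra_simps)

lemma DERIV_similarity_variable_x:
  assumes "\<And>xi tau. ((\<lambda>s. V (s, tau)) has_real_derivative Vx (xi, tau)) (at xi)"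
  shows "((\<lambda>y. V (be t * y + ep t, ga t)) has_real_derivative
           be t * Vx (be t * x + ep t, ga t)) (at x)"
proof -
  have "((\<lambda>y. be t * y + ep t) has_real_derivative be t) (at x)"
    by (auto intro!: derivative_eq_intros)
  from DERIV_chain2[of "\<lambda>s. V (s, ga t)", OF assms this] show ?thesis
    by (simp add: mult.commute)
qed

lemma transform_has_derivative_x:
  assumes "\<And>xi tau. ((\<lambda>s. U (s, tau)) has_real_derivative Ux (xi, tau)) (at xi)"
  shows "((\<lambda>y. transform U y t) has_real_derivative transform_dx U Ux x t) (at x)"
  unfolding transform_def transform_dx_def
  by (rule derivative_eq_intros amplitude_has_derivative_x DERIV_similarity_variable_x[OF assms] refl)+
     (simp add: algebra_simps)

lemma transform_dx_has_derivative_x: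
  assumes "\<And>xi tau. ((\<lambda>s. U (s, tau)) has_real_derivative Ux (xi, tau)) (at xi)"
    and "\<And>xi tau. ((\<lambda>s. Ux (s, tau)) has_real_derivative Uxx (xi, tau)) (at xi)"
  shows "((\<lambda>y. transform_dx U Ux y t) has_real_derivative transform_dxx U Ux Uxx x t) (at x)"
  unfolding transform_dx_def transform_dxx_def
  by (rule derivative_eq_intros amplitude_has_derivative_x
        DERIV_similarity_variable_x[OF assms(1)] DERIV_similarity_variable_x[OF assms(2)] refl)+
     (simp add: algebra_simps power2_eq_square)

lemma mu'_eq: "t \<in> I \<Longrightarrow> mu' t = - (4 * a t * al t + 2 * d t) * mu t"
  using al_mu[of t] a_nz[of t] mu_pos[of t] by (simp add: field_simps)

lemma amplitude_has_derivative_t: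
  assumes t: "t \<in> I"
  shows "((\<lambda>s. amplitude x s) has_real_derivative
           (2 * a t * al t + d t + al' t * x\<^sup>2 + de' t * x + ka' t) * amplitude x t) (at t within I)"
proof -
  have "(-1/2) * mu t powr (-1/2 - 1) * mu' t
      = (2 * a t * al t + d t) * (mu t powr (-1/2 - 1) * mu t)"
    by (simp add: mu'_eq[OF t] algebra_simps)
  also have "mu t powr (-1/2 - 1) * mu t = mu t powr (-1/2)"
    using mu_pos[OF t] powr_add[of "mu t" "-1/2 - 1" 1] by simp
  finally have dm: "((\<lambda>s. mu s powr (-1/2)) has_real_derivative (2 * a t * al t + d t) * mu t powr (-1/2))
                  (at t within I)"
    using DERIV_chain2[OF has_real_derivative_powr[OF mu_pos[OF t]] mu_deriv[OF t], of "-1/2"]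
    by simp
  show ?thesis
    unfolding amplitude_def phaseS_def
    by (rule dm al_deriv[OF t] de_deriv[OF t] ka_deriv[OF t] derivative_eq_intros refl)+
       (simp add: algebra_simps)
qed

lemma transform_has_derivative_t:
  assumes t: "t \<in> I"
    and U_diff: "\<And>p. (U has_derivative (\<lambda>(h, k). Ux p * h + Ut p * k)) (at p)"
  shows "((\<lambda>s. transform U x s) has_real_derivative
           (2 * a t * al t + d t + al' t * x\<^sup>2 + de' t * x + ka' t) * transform U x t
           + amplitude x t * ((be' t * x + ep' t) * Ux (be t * x + ep t, ga t)
                              + ga' t * Ut (be t * x + ep t, ga t))) (at t within I)"
proof -
  have "((\<lambda>s. U (be s * x + ep s, ga s)) has_real_derivative
          Ux (be t * x + ep t, ga t) * (be' t * x + ep' t) + Ut (be t * x + ep t, ga t) * ga' t)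
          (at t within I)"
    by (rule DERIV_chain_pair[OF U_diff])
       (auto intro!: derivative_eq_intros be_deriv[OF t] ep_deriv[OF t] ga_deriv[OF t])
  then show ?thesis
    unfolding transform_def
    by (auto intro!: derivative_eq_intros amplitude_has_derivative_t[OF t] simp: algebra_simps)
qed

lemma transform_solves_linear_equation:
  assumes t: "t \<in> I"
    and U_diff: "\<And>p. (U has_derivative (\<lambda>(h, k). Ux p * h + Ut p * k)) (at p)"
    and pde: "\<And>p. Ut p = Uxx p + N p"
  shows "((\<lambda>s. transform U x s) has_real_derivative
           a t * transform_dxx U Ux Uxx x t - (b t * x\<^sup>2 - d t - x * f t) * transform U x t
           - (g t - c t * x) * transform_dx U Ux x t
           + a t * (be t)\<^sup>2 * amplitude x t * N (be t * x + ep t, ga t)) (at t within I)"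
proof -
  have al': "al' t = 2 * c t * al t + 4 * a t * (al t)\<^sup>2 - b t"
    and de': "de' t = (c t + 4 * a t * al t) * de t + f t - 2 * al t * g t"
    using ode_al[OF t] ode_de[OF t] by simp_all
  show ?thesis
    using transform_has_derivative_t[OF t U_diff]
    unfolding transform_dxx_def transform_dx_def transform_def
    by (rule DERIV_cong)
       (simp add: al' de' ode_be[OF t] ode_ga[OF t] ode_ep[OF t] ode_ka[OF t] pde
         algebra_simps power2_eq_square)
qed

lemma mu_exp_amplitude_sq:
  "t \<in> I \<Longrightarrow> mu t * exp (- 2 * phaseS al de ka x t) * (amplitude x t)\<^sup>2 = 1"
  using mu_pos[of t]
  by (simp add: amplitude_def power_mult_distrib powr_powr[symmetric] powr_minus
      exp_of_nat_mult[symmetric] exp_add[symmetric] powr_half_sqrt field_simps)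

end

theorem theorem4:
  fixes I :: "real set"
    and a b c d f g :: "real \<Rightarrow> real"
    and b1 b2 :: real
    and mu al be ga de ep ka :: "real \<Rightarrow> real"
    and mu' al' be' ga' de' ep' ka' :: "real \<Rightarrow> real"
    and u v :: "real \<times> real \<Rightarrow> real"
    and u_xi u_xixi u_tau v_xi v_xixi v_tau :: "real \<times> real \<Rightarrow> real"
  assumes I_interval: "is_interval I"
    and a_nz: "\<And>t. t \<in> I \<Longrightarrow> a t \<noteq> 0"
    and mu_pos: "\<And>t. t \<in> I \<Longrightarrow> mu t > 0"
    and mu_deriv: "\<And>t. t \<in> I \<Longrightarrow> (mu has_real_derivative mu' t) (at t within I)"
    and al_deriv: "\<And>t. t \<in> I \<Longrightarrow> (al has_real_derivative al' t) (at t within I)"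
    and be_deriv: "\<And>t. t \<in> I \<Longrightarrow> (be has_real_derivative be' t) (at t within I)"
    and ga_deriv: "\<And>t. t \<in> I \<Longrightarrow> (ga has_real_derivative ga' t) (at t within I)"
    and de_deriv: "\<And>t. t \<in> I \<Longrightarrow> (de has_real_derivative de' t) (at t within I)"
    and ep_deriv: "\<And>t. t \<in> I \<Longrightarrow> (ep has_real_derivative ep' t) (at t within I)"
    and ka_deriv: "\<And>t. t \<in> I \<Longrightarrow> (ka has_real_derivative ka' t) (at t within I)"
    and ode_al: "\<And>t. t \<in> I \<Longrightarrow> al' t + b t = 2 * c t * al t + 4 * a t * (al t)\<^sup>2"
    and ode_be: "\<And>t. t \<in> I \<Longrightarrow> be' t = (c t + 4 * a t * al t) * be t"
    and ode_ga: "\<And>t. t \<in> I \<Longrightarrow> ga' t = a t * (be t)\<^sup>2"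
    and ode_de: "\<And>t. t \<in> I \<Longrightarrow> de' t + 2 * al t * g t = (c t + 4 * a t * al t) * de t + f t"
    and ode_ep: "\<And>t. t \<in> I \<Longrightarrow> ep' t = (2 * a t * de t - g t) * be t"
    and ode_ka: "\<And>t. t \<in> I \<Longrightarrow> ka' t = a t * (de t)\<^sup>2 - g t * de t"
    and al_mu: "\<And>t. t \<in> I \<Longrightarrow> al t = - mu' t / (4 * a t * mu t) - d t / (2 * a t)"
    and u_diff: "\<And>p. (u has_derivative (\<lambda>(h, k). u_xi p * h + u_tau p * k)) (at p)"
    and u_xi_diff: "\<And>xi tau. ((\<lambda>s. u_xi (s, tau)) has_real_derivative u_xixi (xi, tau)) (at xi)"
    and v_diff: "\<And>p. (v has_derivative (\<lambda>(h, k). v_xi p * h + v_tau p * k)) (at p)"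
    and v_xi_diff: "\<And>xi tau. ((\<lambda>s. v_xi (s, tau)) has_real_derivative v_xixi (xi, tau)) (at xi)"
    and pde_u: "\<And>p. u_tau p = u_xixi p - u p * (v p)\<^sup>2 + b1 * (1 - u p)"
    and pde_v: "\<And>p. v_tau p = v_xixi p + u p * (v p)\<^sup>2 - b1 * v p + b2"
  defines "h1 \<equiv> \<lambda>x t. a t * (be t)\<^sup>2 * mu t * exp (- 2 * phaseS al de ka x t)"
    and "L1 \<equiv> \<lambda>t. - b1 * a t * (be t)\<^sup>2"
    and "M1 \<equiv> \<lambda>x t. b1 * a t * (be t)\<^sup>2 * mu t powr (-1/2) * exp (phaseS al de ka x t)"
    and "M2 \<equiv> \<lambda>x t. b2 * a t * (be t)\<^sup>2 * mu t powr (-1/2) * exp (phaseS al de ka x t)"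
    and "psi \<equiv> \<lambda>x t. mu t powr (-1/2) * exp (phaseS al de ka x t) * u (be t * x + ep t, ga t)"
    and "phi \<equiv> \<lambda>x t. mu t powr (-1/2) * exp (phaseS al de ka x t) * v (be t * x + ep t, ga t)"
  shows "\<forall>t\<in>I. \<exists>psi_x psi_xx phi_x phi_xx.
           (\<forall>y. ((\<lambda>y. psi y t) has_real_derivative psi_x y) (at y)) \<and>
           (\<forall>y. (psi_x has_real_derivative psi_xx y) (at y)) \<and>
           (\<forall>y. ((\<lambda>y. phi y t) has_real_derivative phi_x y) (at y)) \<and>
           (\<forall>y. (phi_x has_real_derivative phi_xx y) (at y)) \<and>
           (\<forall>x. ((\<lambda>s. psi x s) has_real_derivative
                  (a t * psi_xx x - (b t * x\<^sup>2 - d t - L1 t - x * f t) * psi x t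
                   - (g t - c t * x) * psi_x x - h1 x t * psi x t * (phi x t)\<^sup>2 + M1 x t))
                 (at t within I)) \<and>
           (\<forall>x. ((\<lambda>s. phi x s) has_real_derivative
                  (a t * phi_xx x - (b t * x\<^sup>2 - d t - L1 t - x * f t) * phi x t
                   - (g t - c t * x) * phi_x x + h1 x t * psi x t * (phi x t)\<^sup>2 + M2 x t))
                 (at t within I))"
proof (intro ballI exI conjI allI)
  interpret riccati_system I a b c d f g mu al be ga de ep ka mu' al' be' ga' de' ep' ka'
    by unfold_locales (fact a_nz mu_pos mu_deriv al_deriv be_deriv ga_deriv de_deriv ep_deriv
        ka_deriv ode_al ode_be ode_ga ode_de ode_ep ode_ka al_mu)+
  have psi: "psi = transform u" and phi: "phi = transform v"
    by (simp_all add: psi_def phi_def transform_def amplitude_def fun_eq_iff)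
  note u_partial = DERIV_pair_fst[OF u_diff] and v_partial = DERIV_pair_fst[OF v_diff]
  show "((\<lambda>y. psi y t) has_real_derivative transform_dx u u_xi y t) (at y)"
    and "((\<lambda>y. phi y t) has_real_derivative transform_dx v v_xi y t) (at y)" for t y
    unfolding psi phi by (rule transform_has_derivative_x u_partial v_partial)+
  show "((\<lambda>y. transform_dx u u_xi y t) has_real_derivative transform_dxx u u_xi u_xixi y t) (at y)"
    and "((\<lambda>y. transform_dx v v_xi y t) has_real_derivative transform_dxx v v_xi v_xixi y t) (at y)"
    for t y
    by (rule transform_dx_has_derivative_x u_partial v_partial u_xi_diff v_xi_diff)+
  fix t x assume t: "t \<in> I"
  have coupling: "h1 x t * transform u x t * (transform v x t)\<^sup>2
      = a t * (be t)\<^sup>2 * amplitude x t * (u (be t * x + ep t, ga t) * (v (be t * x + ep t, ga t))\<^sup>2)"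
    using mu_exp_amplitude_sq[OF t, of x]
    by (simp add: h1_def transform_def power_mult_distrib algebra_simps)
  have "u_tau p = u_xixi p + (b1 * (1 - u p) - u p * (v p)\<^sup>2)" for p
    using pde_u by simp
  from transform_solves_linear_equation[OF t u_diff this]
  show "((\<lambda>s. psi x s) has_real_derivative
          a t * transform_dxx u u_xi u_xixi x t - (b t * x\<^sup>2 - d t - L1 t - x * f t) * psi x t
          - (g t - c t * x) * transform_dx u u_xi x t - h1 x t * psi x t * (phi x t)\<^sup>2 + M1 x t)
          (at t within I)"
    unfolding psi phi
    by (rule DERIV_cong)
       (simp only: coupling, simp add: L1_def M1_def transform_def amplitude_def algebra_simps)
  have "v_tau p = v_xixi p + (u p * (v p)\<^sup>2 - b1 * v p + b2)" for p
    using pde_v by simp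
  from transform_solves_linear_equation[OF t v_diff this]
  show "((\<lambda>s. phi x s) has_real_derivative
          a t * transform_dxx v v_xi v_xixi x t - (b t * x\<^sup>2 - d t - L1 t - x * f t) * phi x t
          - (g t - c t * x) * transform_dx v v_xi x t + h1 x t * psi x t * (phi x t)\<^sup>2 + M2 x t)
          (at t within I)"
    unfolding psi phi
    by (rule DERIV_cong)
       (simp only: coupling, simp add: L1_def M2_def transform_def amplitude_def algebra_simps)
qed

end
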